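(* For every integer $j\ge0$, $$\int_0^\infty\frac{(\pi^2+t^2)^j}{e^t-1}\sin\!\left(2j\tan^{-1}\!\left(\frac t\pi\right)\right)dt=\frac{j\,\pi^{2j+1}}{2j+1}.$$ *)

theory Defs
  imports "HOL-Analysis.Analysis"
begin

end

theory Submission
  imports Defs "HOL-Complex_Analysis.Complex_Analysis" "HOL-Real_Asymp.Real_Asymp"
begin

text \<open>
  Integrate h(w) = (w^(2j) - pi^(2j)) / (1 + exp(-iw)) around the rectangle with corners
  -pi, pi, pi + iY, -pi + iY. The denominator vanishes only at odd multiples of pi and the
  numerator cancels its zeros at +-pi, so h is holomorphic on the strip |Re w| < 2pi and the
  contour integral is 0. On the real axis h(x) + h(-x) = x^(2j) - pi^(2j), so the bottom side
  contributes pi^(2j+1)/(2j+1) - pi^(2j+1). Since -pi + it = -conj(pi + it), the vertical sides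
  combine to 2i Im((pi + it)^(2j)) / (1 - e^t), which is -2i times the integrand. The top side is
  O(Y^(2j) e^(-Y)); letting Y tend to infinity (by dominated convergence) gives the formula.
\<close>

lemma one_plus_exp_eq_0_iff:
  "1 + exp (- (\<i> * z)) = 0 \<longleftrightarrow> (\<exists>n::int. z = of_real ((2 * of_int n + 1) * pi))"
proof -
  have "exp (- (\<i> * z) + \<i> * of_real pi) = - exp (- (\<i> * z))"
    by (simp add: exp_diff exp_minus divide_inverse)
  then have "1 + exp (- (\<i> * z)) = 0 \<longleftrightarrow> exp (- (\<i> * z) + \<i> * of_real pi) = 1"
    by (auto simp: add_eq_0_iff minus_equation_iff)
  also have "\<dots> \<longleftrightarrow> Im z = 0 \<and> (\<exists>n::int. pi - Re z = of_int (2 * n) * pi)"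
    unfolding exp_eq_1 by simp
  also have "\<dots> \<longleftrightarrow> (\<exists>n::int. z = of_real ((2 * of_int n + 1) * pi))"
  proof
    assume "Im z = 0 \<and> (\<exists>n::int. pi - Re z = of_int (2 * n) * pi)"
    then obtain n :: int where "Im z = 0" and n: "pi - Re z = of_int (2 * n) * pi"
      by blast
    moreover have "Re z = (2 * of_int (- n) + 1) * pi"
      using n by (simp add: algebra_simps)
    ultimately have "z = of_real ((2 * of_int (- n) + 1) * pi)"
      by (simp add: complex_eq_iff)
    then show "\<exists>n::int. z = of_real ((2 * of_int n + 1) * pi)" ..
  next
    assume "\<exists>n::int. z = of_real ((2 * of_int n + 1) * pi)"
    then obtain n :: int where "z = of_real ((2 * of_int n + 1) * pi)" ..
    then have "Im z = 0" "pi - Re z = of_int (2 * (- n)) * pi"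
      by (simp_all add: algebra_simps)
    then show "Im z = 0 \<and> (\<exists>n::int. pi - Re z = of_int (2 * n) * pi)"
      by blast
  qed
  finally show ?thesis .
qed

lemma inverse_one_plus_exp_add:
  fixes z :: complex
  assumes "1 + exp z \<noteq> 0"
  shows "1 / (1 + exp (- z)) + 1 / (1 + exp z) = 1"
proof -
  have "1 / (1 + exp (- z)) = exp z / (1 + exp z)"
    using assms by (simp add: exp_minus field_simps)
  with assms show ?thesis
    by (simp add: add_divide_distrib [symmetric] add.commute)
qed

lemma Im_power_Re_pos:
  assumes "Re z > 0"
  shows "Im (z ^ n) = cmod z ^ n * sin (real n * arctan (Im z / Re z))"
proof -
  have "z ^ n = rcis (cmod z ^ n) (real n * Arg z)"
    by (metis DeMoivre2 rcis_cmod_Arg)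
  then show ?thesis
    using arg_conv_arctan[OF assms] by simp
qed

lemma power_le_fact_mult_exp:
  fixes x :: real
  assumes "x \<ge> 0"
  shows "x ^ n \<le> fact n * exp x"
proof -
  have "x ^ n / fact n \<le> (\<Sum>k. x ^ k /\<^sub>R fact k)"
    using summable_exp_generic[of x] assms
    by (intro order_trans[OF _ sum_le_suminf[of _ "{n}"]]) (auto simp: divide_inverse_commute)
  then show ?thesis
    by (simp add: exp_def divide_le_eq mult.commute)
qed

lemma divide_exp_minus_one_le:
  fixes t :: real
  assumes "t > 0"
  shows "t / (exp t - 1) \<le> 2 * exp (- (t / 2))"
proof -
  define s where "s = exp (t / 2)"
  have s_pos: "s > 0" and s_sq: "exp t = s * s"
    by (simp_all add: s_def flip: exp_add)
  have s_ge: "t / 2 \<le> s - 1"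
    using exp_ge_add_one_self[of "t / 2"] unfolding s_def by linarith
  then have "t / 2 * s \<le> exp t - 1"
    using mult_mono[OF s_ge, of s "s + 1"] s_pos s_sq assms by (simp add: algebra_simps)
  then have "t / (exp t - 1) \<le> t / (t / 2 * s)"
    using assms s_pos by (intro divide_left_mono) auto
  also have "\<dots> = 2 * exp (- (t / 2))"
    using assms by (simp add: s_def exp_minus field_simps)
  finally show ?thesis .
qed

lemma has_integral_power_real:
  fixes a b :: real
  assumes "a \<le> b"
  shows "((\<lambda>x. x ^ n) has_integral (b ^ (n + 1) - a ^ (n + 1)) / (n + 1)) {a..b}"
proof -
  have "((\<lambda>x. x ^ n) has_integral b ^ (n + 1) / (n + 1) - a ^ (n + 1) / (n + 1)) {a..b}"
  proof (rule fundamental_theorem_of_calculus[OF assms])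
    fix x assume "x \<in> {a..b}"
    show "((\<lambda>x. x ^ (n + 1) / (n + 1)) has_vector_derivative x ^ n) (at x within {a..b})"
      unfolding has_real_derivative_iff_has_vector_derivative [symmetric]
      by (auto intro!: derivative_eq_intros simp del: power_Suc)
  qed
  then show ?thesis
    by (simp add: diff_divide_distrib)
qed

lemma has_integral_atLeast_of_truncations:
  fixes f g I :: "real \<Rightarrow> real"
  assumes trunc: "\<And>Y. Y > a \<Longrightarrow> (f has_integral I Y) {a..Y}"
    and lim: "(I \<longlongrightarrow> J) at_top"
    and dom: "\<And>t. t \<ge> a \<Longrightarrow> \<bar>f t\<bar> \<le> g t"
    and g: "g integrable_on {a..}"
  shows "(f has_integral J) {a..}"
proof -
  define Y where "Y k = a + 1 + real k" for k :: nat
  define fk where "fk k t = (if t \<in> {a..Y k} then f t else 0)" for k t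
  have Y_lim: "filterlim Y at_top sequentially"
    unfolding Y_def by (rule filterlim_tendsto_add_at_top[OF tendsto_const filterlim_real_sequentially])
  have fk_int: "(fk k has_integral I (Y k)) {a..}" for k
    unfolding fk_def using trunc[of "Y k"] by (subst has_integral_restrict) (auto simp: Y_def)
  have fk_lim: "(\<lambda>k. fk k t) \<longlonglongrightarrow> f t" if "t \<in> {a..}" for t
  proof (rule tendsto_eventually)
    have "\<forall>\<^sub>F k in sequentially. t \<le> Y k"
      using filterlim_at_top Y_lim by blast
    then show "\<forall>\<^sub>F k in sequentially. fk k t = f t"
      by eventually_elim (use that in \<open>auto simp: fk_def\<close>)
  qed
  have fk_dom: "norm (fk k t) \<le> g t" if "t \<in> {a..}" for k t
    using dom[of t] that by (auto simp: fk_def)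
  have "f integrable_on {a..}" and "(\<lambda>k. integral {a..} (fk k)) \<longlonglongrightarrow> integral {a..} f"
    using dominated_convergence[OF _ g fk_dom fk_lim] fk_int by blast+
  moreover have "(\<lambda>k. integral {a..} (fk k)) \<longlonglongrightarrow> J"
  proof -
    have "integral {a..} (fk k) = I (Y k)" for k
      using fk_int by (rule integral_unique)
    then show ?thesis
      using filterlim_compose[OF lim Y_lim] by (simp add: o_def)
  qed
  ultimately show ?thesis
    using LIMSEQ_unique by (metis integrable_integral)
qed

text \<open>A convex neighbourhood of the rectangles in which +-pi are the only zeros of 1 + exp(-iw).\<close>

definition strip :: "complex set" where
  "strip = {w. - 2 * pi < Re w} \<inter> {w. Re w < 2 * pi}"

lemma open_strip: "open strip" and convex_strip: "convex strip"
  unfolding strip_def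
  by (auto intro!: open_halfspace_Re_gt open_halfspace_Re_lt convex_Int
      convex_halfspace_Re_gt convex_halfspace_Re_lt)

lemma strip_one_plus_exp_eq_0:
  assumes "w \<in> strip" "1 + exp (- (\<i> * w)) = 0"
  shows "w = of_real pi \<or> w = - of_real pi"
proof -
  obtain n :: int where n: "w = of_real ((2 * of_int n + 1) * pi)"
    using assms(2) one_plus_exp_eq_0_iff by blast
  then have "- 2 * pi < (2 * of_int n + 1) * pi" "(2 * of_int n + 1) * pi < 2 * pi"
    using assms(1) by (simp_all add: strip_def)
  then have "- 2 < 2 * real_of_int n + 1" "2 * real_of_int n + 1 < 2"
    by (simp_all only: mult_less_cancel_right_pos[OF pi_gt_zero])
  then have "n = 0 \<or> n = -1" by linarith
  then show ?thesis using n by auto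
qed

lemma strip_if_abs_Re_le_pi: "\<bar>Re w\<bar> \<le> pi \<Longrightarrow> w \<in> strip"
  using pi_gt_zero unfolding strip_def by (auto simp del: pi_gt_zero)

text \<open>The values at +-pi are the L'Hopital limits; there the denominator has derivative i.\<close>

definition rect_kernel :: "nat \<Rightarrow> complex \<Rightarrow> complex" where
  "rect_kernel j w =
     (if w = of_real pi \<or> w = - of_real pi then of_nat (2 * j) * w ^ (2 * j - 1) / \<i>
      else (w ^ (2 * j) - of_real pi ^ (2 * j)) / (1 + exp (- (\<i> * w))))"

lemma rect_kernel_holomorphic: "rect_kernel j holomorphic_on strip"
proof (rule no_isolated_singularity'[where K = "{of_real pi, - of_real pi}"])
  let ?q = "\<lambda>w. (w ^ (2 * j) - of_real pi ^ (2 * j)) / (1 + exp (- (\<i> * w)))"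
  have "?q holomorphic_on strip - {of_real pi, - of_real pi}"
    by (intro holomorphic_intros) (use strip_one_plus_exp_eq_0 in auto)
  then show "rect_kernel j holomorphic_on strip - {of_real pi, - of_real pi}"
    by (rule holomorphic_transform) (auto simp: rect_kernel_def)
  fix z :: complex assume z: "z \<in> {of_real pi, - of_real pi}"
  have "(?q \<longlongrightarrow> rect_kernel j z) (at z)"
  proof (rule lhopital_complex_simple)
    show "((\<lambda>w. w ^ (2 * j) - of_real pi ^ (2 * j)) has_field_derivative
            of_nat (2 * j) * z ^ (2 * j - 1)) (at z)"
      by (auto intro!: derivative_eq_intros)
    show "((\<lambda>w. 1 + exp (- (\<i> * w))) has_field_derivative \<i>) (at z)"
      using z by (auto intro!: derivative_eq_intros simp: exp_minus)
  qed (use z in \<open>auto simp: rect_kernel_def power_mult exp_minus\<close>)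
  moreover have "\<forall>\<^sub>F w in at z. ?q w = rect_kernel j w"
    using eventually_neq_at_within[of "of_real pi" z UNIV] eventually_neq_at_within[of "- of_real pi" z UNIV]
    by eventually_elim (auto simp: rect_kernel_def)
  ultimately show "(rect_kernel j \<longlongrightarrow> rect_kernel j z) (at z within strip)"
    using Lim_transform_eventually Lim_at_imp_Lim_at_within by blast
qed (auto simp: open_strip)

lemma rect_kernel_add_reflect:
  assumes "- pi < x" "x < pi"
  shows "rect_kernel j (of_real x) + rect_kernel j (- of_real x) = of_real (x ^ (2 * j) - pi ^ (2 * j))"
proof -
  have x_strip: "- of_real x \<in> strip"
    using assms by (auto simp: strip_def)
  have x_ne: "of_real x \<noteq> (of_real pi :: complex)" "of_real x \<noteq> - (of_real pi :: complex)"
    using assms by (auto simp flip: of_real_minus)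
  have "1 + exp (\<i> * of_real x) \<noteq> 0"
    using strip_one_plus_exp_eq_0[OF x_strip] x_ne by auto
  then have inverse_sum: "1 / (1 + exp (- (\<i> * of_real x))) + 1 / (1 + exp (\<i> * of_real x)) = 1"
    by (rule inverse_one_plus_exp_add)
  have even_power: "(- w) ^ (2 * j) = w ^ (2 * j)" for w :: complex
    by (simp add: power_mult)
  have "rect_kernel j (of_real x) + rect_kernel j (- of_real x) =
      (of_real x ^ (2 * j) - of_real pi ^ (2 * j)) *
      (1 / (1 + exp (- (\<i> * of_real x))) + 1 / (1 + exp (\<i> * of_real x)))"
    using x_ne even_power by (simp add: rect_kernel_def distrib_left)
  also have "\<dots> = of_real (x ^ (2 * j) - pi ^ (2 * j))"
    unfolding inverse_sum by simp
  finally show ?thesis .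
qed

definition integrand :: "nat \<Rightarrow> real \<Rightarrow> real" where
  "integrand j t = (pi\<^sup>2 + t\<^sup>2) ^ j / (exp t - 1) * sin (2 * real j * arctan (t / pi))"

lemma rect_kernel_vertical_diff:
  assumes "t > 0"
  shows "rect_kernel j (Complex pi t) - rect_kernel j (Complex (- pi) t) = - 2 * \<i> * of_real (integrand j t)"
proof -
  define z where "z = Complex pi t"
  have z_ne: "z \<noteq> of_real pi" "z \<noteq> - of_real pi" "- cnj z \<noteq> of_real pi" "- cnj z \<noteq> - of_real pi"
    using assms by (auto simp: z_def complex_eq_iff)
  have denom: "1 + exp (- (\<i> * z)) = of_real (1 - exp t)" "1 + exp (- (\<i> * - cnj z)) = of_real (1 - exp t)"
    by (simp_all add: z_def exp_eq_polar cis_def complex_eq_iff)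
  have right: "rect_kernel j z = (z ^ (2 * j) - of_real pi ^ (2 * j)) / of_real (1 - exp t)"
    using z_ne unfolding rect_kernel_def denom by simp
  have left: "rect_kernel j (- cnj z) = (cnj (z ^ (2 * j)) - of_real pi ^ (2 * j)) / of_real (1 - exp t)"
    using z_ne unfolding rect_kernel_def denom by (simp add: power_mult)
  have Im_z: "Im (z ^ (2 * j)) = (pi\<^sup>2 + t\<^sup>2) ^ j * sin (2 * real j * arctan (t / pi))"
  proof -
    have "cmod z ^ (2 * j) = (pi\<^sup>2 + t\<^sup>2) ^ j"
      by (simp add: z_def cmod_def power_mult)
    then show ?thesis
      using Im_power_Re_pos[of z "2 * j"] by (simp add: z_def)
  qed
  have "rect_kernel j z - rect_kernel j (- cnj z) = (z ^ (2 * j) - cnj (z ^ (2 * j))) / of_real (1 - exp t)"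
    unfolding right left by (simp add: diff_divide_distrib)
  also have "\<dots> = of_real (2 * Im (z ^ (2 * j)) / (1 - exp t)) * \<i>"
    unfolding complex_diff_cnj by simp
  also have "2 * Im (z ^ (2 * j)) / (1 - exp t) = - 2 * integrand j t"
    using assms unfolding Im_z integrand_def by (simp add: field_simps)
  also have "of_real (- 2 * integrand j t) * \<i> = - 2 * \<i> * of_real (integrand j t)"
    by simp
  finally have "rect_kernel j z - rect_kernel j (- cnj z) = - 2 * \<i> * of_real (integrand j t)" .
  moreover have "- cnj z = Complex (- pi) t"
    by (simp add: z_def complex_eq_iff)
  ultimately show ?thesis
    by (simp add: z_def)
qed

lemma rect_kernel_continuous_on:
  assumes "continuous_on A g" "g ` A \<subseteq> strip"
  shows "continuous_on A (\<lambda>x. rect_kernel j (g x))"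
  using continuous_on_compose2[OF holomorphic_on_imp_continuous_on[OF rect_kernel_holomorphic] assms] .

lemma has_integral_rect_kernel_real_axis:
  "((\<lambda>x. rect_kernel j (of_real x)) has_integral of_real (pi ^ (2 * j + 1) / (2 * j + 1) - pi ^ (2 * j + 1)))
     {- pi..pi}"
proof -
  have real_axis: "of_real ` {- pi..pi} \<subseteq> strip"
    by (auto intro!: strip_if_abs_Re_le_pi)
  have "(\<lambda>x. rect_kernel j (of_real x)) integrable_on {- pi..pi}"
    by (intro integrable_continuous_real rect_kernel_continuous_on[OF _ real_axis] continuous_intros)
  then obtain I where I: "((\<lambda>x. rect_kernel j (of_real x)) has_integral I) {- pi..pi}"
    by blast
  then have "((\<lambda>x. rect_kernel j (- of_real x)) has_integral I) {- pi..pi}"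
    using has_integral_reflect_real[of "\<lambda>x. rect_kernel j (of_real x)", THEN iffD2, of I "- pi" pi]
    by simp
  with I have sum: "((\<lambda>x. rect_kernel j (of_real x) + rect_kernel j (- of_real x)) has_integral I + I) {- pi..pi}"
    by (rule has_integral_add)
  have "((\<lambda>x. x ^ (2 * j) - pi ^ (2 * j)) has_integral
          2 * pi ^ (2 * j + 1) / (2 * j + 1) - 2 * pi ^ (2 * j + 1)) {- pi..pi}"
    using has_integral_diff[OF has_integral_power_real[of "- pi" pi "2 * j"]
        has_integral_const_real[of "pi ^ (2 * j)" "- pi" pi]]
    by (simp add: algebra_simps)
  then have poly: "((\<lambda>x. of_real (x ^ (2 * j) - pi ^ (2 * j)) :: complex) has_integral
          of_real (2 * pi ^ (2 * j + 1) / (2 * j + 1) - 2 * pi ^ (2 * j + 1))) {- pi..pi}"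
    by (rule has_integral_linear[OF _ bounded_linear_of_real, unfolded o_def])
  have "((\<lambda>x. rect_kernel j (of_real x) + rect_kernel j (- of_real x)) has_integral
          of_real (2 * pi ^ (2 * j + 1) / (2 * j + 1) - 2 * pi ^ (2 * j + 1))) {- pi..pi}"
    by (rule has_integral_spike[of "{- pi, pi}", OF _ _ poly]) (auto simp: rect_kernel_add_reflect)
  then have "I + I = of_real (2 * pi ^ (2 * j + 1) / (2 * j + 1) - 2 * pi ^ (2 * j + 1))"
    using sum by (rule has_integral_unique[rotated])
  then have "I = of_real (pi ^ (2 * j + 1) / (2 * j + 1) - pi ^ (2 * j + 1))"
    by (simp add: complex_eq_iff)
  with I show ?thesis
    by simp
qed

lemma norm_rect_kernel_top_le:
  assumes "Y > 0" "w \<in> closed_segment (Complex pi Y) (Complex (- pi) Y)"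
  shows "cmod (rect_kernel j w) \<le> ((pi + Y) ^ (2 * j) + pi ^ (2 * j)) / (exp Y - 1)"
proof -
  obtain u :: real where u: "0 \<le> u" "u \<le> 1" "w = Complex (pi * (1 - 2 * u)) Y"
    using assms(2) by (auto simp: closed_segment_def complex_eq_iff algebra_simps)
  have "\<bar>pi * (1 - 2 * u)\<bar> \<le> pi"
    using u by (auto simp: abs_mult abs_le_iff)
  then have "cmod w \<le> pi + Y"
    using cmod_le[of w] u assms(1) by auto
  then have num: "cmod (w ^ (2 * j) - of_real pi ^ (2 * j)) \<le> (pi + Y) ^ (2 * j) + pi ^ (2 * j)"
    using norm_triangle_ineq4[of "w ^ (2 * j)" "of_real pi ^ (2 * j)"]
      power_mono[of "cmod w" "pi + Y" "2 * j"]
    by (simp add: norm_power)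
  have "exp Y - 1 = cmod (exp (- (\<i> * w))) - cmod (1 :: complex)"
    using u by simp
  also have "\<dots> \<le> cmod (1 + exp (- (\<i> * w)))"
    by (metis add.commute norm_diff_ineq)
  finally have denom: "exp Y - 1 \<le> cmod (1 + exp (- (\<i> * w)))" .
  have "cmod (rect_kernel j w) = cmod (w ^ (2 * j) - of_real pi ^ (2 * j)) / cmod (1 + exp (- (\<i> * w)))"
    using u assms(1) by (auto simp: rect_kernel_def norm_divide complex_eq_iff)
  also have "\<dots> \<le> ((pi + Y) ^ (2 * j) + pi ^ (2 * j)) / (exp Y - 1)"
    using assms(1) by (intro frac_le num denom) auto
  finally show ?thesis .
qed

definition rect_top_integral :: "nat \<Rightarrow> real \<Rightarrow> complex" where
  "rect_top_integral j Y = contour_integral (linepath (Complex pi Y) (Complex (- pi) Y)) (rect_kernel j)"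

lemma has_contour_integral_rect_top:
  "(rect_kernel j has_contour_integral rect_top_integral j Y) (linepath (Complex pi Y) (Complex (- pi) Y))"
proof -
  have "closed_segment (Complex pi Y) (Complex (- pi) Y) \<subseteq> strip"
    by (rule closed_segment_subset[OF _ _ convex_strip]) (auto simp: strip_def)
  then show ?thesis
    unfolding rect_top_integral_def
    by (intro has_contour_integral_integral contour_integrable_continuous_linepath
        continuous_on_subset[OF holomorphic_on_imp_continuous_on[OF rect_kernel_holomorphic]])
qed

lemma rect_top_integral_tendsto_0: "(rect_top_integral j \<longlongrightarrow> 0) at_top"
proof (rule Lim_null_comparison)
  have bound: "cmod (rect_top_integral j Y) \<le> ((pi + Y) ^ (2 * j) + pi ^ (2 * j)) / (exp Y - 1) * (2 * pi)"
    if "Y > 0" for Y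
  proof -
    have "Complex (- pi) Y - Complex pi Y = of_real (- 2 * pi)"
      by (simp add: complex_eq_iff)
    then have "cmod (Complex (- pi) Y - Complex pi Y) = 2 * pi"
      by simp
    moreover have "0 \<le> ((pi + Y) ^ (2 * j) + pi ^ (2 * j)) / (exp Y - 1)"
      using that by (intro divide_nonneg_nonneg add_nonneg_nonneg) auto
    ultimately show ?thesis
      using has_contour_integral_bound_linepath[OF has_contour_integral_rect_top[of j Y] _
          norm_rect_kernel_top_le[OF that]] by simp
  qed
  show "\<forall>\<^sub>F Y in at_top. norm (rect_top_integral j Y) \<le>
      ((pi + Y) ^ (2 * j) + pi ^ (2 * j)) / (exp Y - 1) * (2 * pi)"
    using eventually_gt_at_top[of 0] by eventually_elim (use bound in simp)
  show "((\<lambda>Y. ((pi + Y) ^ (2 * j) + pi ^ (2 * j)) / (exp Y - 1) * (2 * pi)) \<longlongrightarrow> 0) at_top"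
    by real_asymp
qed

lemma rect_kernel_rectpath_integral_zero:
  assumes "Y \<ge> 0"
  shows "(rect_kernel j has_contour_integral 0) (rectpath (Complex (- pi) 0) (Complex pi Y))"
proof (rule Cauchy_theorem_convex_simple[OF rect_kernel_holomorphic convex_strip valid_path_rectpath])
  have "cbox (Complex (- pi) 0) (Complex pi Y) \<subseteq> strip"
    by (auto simp: in_cbox_complex_iff intro!: strip_if_abs_Re_le_pi)
  then show "path_image (rectpath (Complex (- pi) 0) (Complex pi Y)) \<subseteq> strip"
    using path_image_rectpath_subset_cbox[of "Complex (- pi) 0" "Complex pi Y"] assms by auto
qed simp

lemma rect_kernel_vertical_integrable:
  assumes "\<bar>c\<bar> \<le> pi"
  shows "(\<lambda>t. rect_kernel j (Complex c t)) integrable_on {a..b}"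
proof -
  have "continuous_on {a..b} (Complex c)"
    unfolding Complex_eq by (intro continuous_intros)
  moreover have "Complex c ` {a..b} \<subseteq> strip"
    using assms by (auto intro!: strip_if_abs_Re_le_pi)
  ultimately show ?thesis
    by (intro integrable_continuous_real rect_kernel_continuous_on)
qed

lemma rect_kernel_sides_sum_zero:
  assumes "Y > 0"
    and R: "((\<lambda>t. rect_kernel j (Complex pi t)) has_integral R) {0..Y}"
    and L: "((\<lambda>t. rect_kernel j (Complex (- pi) t)) has_integral L) {0..Y}"
  shows "of_real (pi ^ (2 * j + 1) / (2 * j + 1) - pi ^ (2 * j + 1)) + \<i> * R + rect_top_integral j Y - \<i> * L = 0"
proof -
  define B where "B = complex_of_real (pi ^ (2 * j + 1) / (2 * j + 1) - pi ^ (2 * j + 1))"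
  define T where "T = rect_top_integral j Y"
  have bottom: "(rect_kernel j has_contour_integral B) (linepath (Complex (- pi) 0) (Complex pi 0))"
    using has_contour_integral_linepath_Reals_iff[of "Complex (- pi) 0" "Complex pi 0" "rect_kernel j" B]
      has_integral_rect_kernel_real_axis[of j]
    by (simp add: B_def complex_is_Real_iff)
  have right: "(rect_kernel j has_contour_integral \<i> * R) (linepath (Complex pi 0) (Complex pi Y))"
    using has_contour_integral_linepath_same_Re_iff[of "Complex pi 0" pi "Complex pi Y" 0 Y] R assms(1)
    by simp
  have top: "(rect_kernel j has_contour_integral T) (linepath (Complex pi Y) (Complex (- pi) Y))"
    unfolding T_def by (rule has_contour_integral_rect_top)
  have "(rect_kernel j has_contour_integral \<i> * L) (linepath (Complex (- pi) 0) (Complex (- pi) Y))"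
    using has_contour_integral_linepath_same_Re_iff[of "Complex (- pi) 0" "- pi" "Complex (- pi) Y" 0 Y] L assms(1)
    by simp
  then have left: "(rect_kernel j has_contour_integral - (\<i> * L)) (linepath (Complex (- pi) Y) (Complex (- pi) 0))"
    using has_contour_integral_reversepath by fastforce
  have "rectpath (Complex (- pi) 0) (Complex pi Y) =
          linepath (Complex (- pi) 0) (Complex pi 0) +++ linepath (Complex pi 0) (Complex pi Y) +++
          linepath (Complex pi Y) (Complex (- pi) Y) +++ linepath (Complex (- pi) Y) (Complex (- pi) 0)"
    by (simp add: rectpath_def Let_def)
  moreover have "(rect_kernel j has_contour_integral B + (\<i> * R + (T + - (\<i> * L))))
          (linepath (Complex (- pi) 0) (Complex pi 0) +++ linepath (Complex pi 0) (Complex pi Y) +++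
          linepath (Complex pi Y) (Complex (- pi) Y) +++ linepath (Complex (- pi) Y) (Complex (- pi) 0))"
    by (intro has_contour_integral_join bottom right top left valid_path_join valid_path_linepath)
      simp_all
  ultimately have "(rect_kernel j has_contour_integral B + (\<i> * R + (T + - (\<i> * L))))
          (rectpath (Complex (- pi) 0) (Complex pi Y))"
    by simp
  then have "B + (\<i> * R + (T + - (\<i> * L))) = 0"
    using rect_kernel_rectpath_integral_zero assms(1) has_contour_integral_unique by fastforce
  then show ?thesis
    by (simp add: B_def T_def algebra_simps)
qed

lemma has_integral_integrand_truncated:
  assumes "Y > 0"
  shows "(integrand j has_integral
           real j * pi ^ (2 * j + 1) / (2 * real j + 1) - Re (rect_top_integral j Y) / 2) {0..Y}"
proof -
  obtain R where R: "((\<lambda>t. rect_kernel j (Complex pi t)) has_integral R) {0..Y}"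
    using rect_kernel_vertical_integrable[of pi j 0 Y] by auto
  obtain L where L: "((\<lambda>t. rect_kernel j (Complex (- pi) t)) has_integral L) {0..Y}"
    using rect_kernel_vertical_integrable[of "- pi" j 0 Y] by auto
  have "((\<lambda>t. - 2 * \<i> * of_real (integrand j t)) has_integral R - L) {0..Y}"
    by (rule has_integral_spike[of "{0}", OF _ _ has_integral_diff[OF R L]])
      (auto simp: rect_kernel_vertical_diff)
  then have "((\<lambda>t. Re (\<i> / 2 * (- 2 * \<i> * of_real (integrand j t)))) has_integral Re (\<i> / 2 * (R - L))) {0..Y}"
    by (intro has_integral_Re has_integral_mult_right)
  moreover have "(\<lambda>t. Re (\<i> / 2 * (- 2 * \<i> * of_real (integrand j t)))) = integrand j"
    by (simp add: fun_eq_iff)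
  moreover have "Re (\<i> / 2 * (R - L)) = real j * pi ^ (2 * j + 1) / (2 * real j + 1) - Re (rect_top_integral j Y) / 2"
  proof -
    have "\<i> * (R - L) = - (of_real (pi ^ (2 * j + 1) / (2 * j + 1) - pi ^ (2 * j + 1)) + rect_top_integral j Y)"
      using rect_kernel_sides_sum_zero[OF assms R L] by (simp add: algebra_simps eq_neg_iff_add_eq_0)
    then have "Re (\<i> / 2 * (R - L)) =
        (pi ^ (2 * j + 1) - pi ^ (2 * j + 1) / (2 * j + 1)) / 2 - Re (rect_top_integral j Y) / 2"
      by (simp add: diff_divide_distrib)
    also have "(pi ^ (2 * j + 1) - pi ^ (2 * j + 1) / (2 * j + 1)) / 2 = real j * pi ^ (2 * j + 1) / (2 * real j + 1)"
      by (simp add: field_simps)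
    finally show ?thesis .
  qed
  ultimately show ?thesis
    by (simp only:)
qed

lemma sum_squares_power_le_exp:
  fixes a t :: real
  assumes "a \<ge> 0" "t \<ge> 0"
  shows "(a\<^sup>2 + t\<^sup>2) ^ j \<le> 16 ^ j * fact (2 * j) * exp (a / 4) * exp (t / 4)"
proof -
  have "(a\<^sup>2 + t\<^sup>2) ^ j \<le> ((a + t)\<^sup>2) ^ j"
    using assms by (intro power_mono) (auto simp: power2_eq_square algebra_simps)
  also have "\<dots> = 16 ^ j * ((a + t) / 4) ^ (2 * j)"
    by (simp add: power_mult power_divide)
  also have "\<dots> \<le> 16 ^ j * (fact (2 * j) * exp ((a + t) / 4))"
    using assms by (intro mult_left_mono power_le_fact_mult_exp) auto
  also have "\<dots> = 16 ^ j * fact (2 * j) * exp (a / 4) * exp (t / 4)"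
    by (simp add: add_divide_distrib exp_add)
  finally show ?thesis .
qed

lemma abs_integrand_le_exp:
  "\<exists>K. \<forall>t\<ge>0. \<bar>integrand j t\<bar> \<le> K * exp (- t / 4)"
proof -
  define C where "C = 16 ^ j * fact (2 * j) * exp (pi / 4)"
  have C_nonneg: "C \<ge> 0"
    by (simp add: C_def)
  have "\<bar>integrand j t\<bar> \<le> (C * (2 * real j / pi) * 2) * exp (- t / 4)" if "t \<ge> 0" for t
  proof (cases "t = 0")
    case True
    then show ?thesis
      by (simp add: integrand_def C_def)
  next
    case False
    with that have t: "t > 0" by simp
    have "\<bar>sin (2 * real j * arctan (t / pi))\<bar> \<le> \<bar>2 * real j * arctan (t / pi)\<bar>"
      by (rule abs_sin_x_le_abs_x)
    also have "\<dots> \<le> 2 * real j * (t / pi)"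
      using mult_left_mono[OF abs_arctan_le[of "t / pi"], of "2 * real j"] t by (simp add: abs_mult)
    finally have sin_le: "\<bar>sin (2 * real j * arctan (t / pi))\<bar> \<le> 2 * real j * (t / pi)" .
    have "\<bar>integrand j t\<bar> = (pi\<^sup>2 + t\<^sup>2) ^ j / (exp t - 1) * \<bar>sin (2 * real j * arctan (t / pi))\<bar>"
      using t by (simp add: integrand_def abs_mult)
    also have "\<dots> \<le> (pi\<^sup>2 + t\<^sup>2) ^ j / (exp t - 1) * (2 * real j * (t / pi))"
      using t by (intro mult_left_mono sin_le) simp
    also have "\<dots> = (pi\<^sup>2 + t\<^sup>2) ^ j * (2 * real j / pi) * (t / (exp t - 1))"
      by (simp add: ac_simps)
    also have "\<dots> \<le> C * exp (t / 4) * (2 * real j / pi) * (2 * exp (- (t / 2)))"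
      using t sum_squares_power_le_exp[of pi t j] C_nonneg unfolding C_def
      by (intro mult_mono divide_exp_minus_one_le) auto
    also have "\<dots> = (C * (2 * real j / pi) * 2) * exp (- t / 4)"
      by (simp add: field_simps flip: exp_add)
    finally show ?thesis .
  qed
  then show ?thesis
    by blast
qed

theorem lemma1:
  fixes j :: nat
  shows "((\<lambda>t::real. (pi\<^sup>2 + t\<^sup>2) ^ j / (exp t - 1) * sin (2 * real j * arctan (t / pi)))
          has_integral (real j * pi ^ (2 * j + 1) / (2 * real j + 1))) {0<..}"
proof -
  define J where "J = real j * pi ^ (2 * j + 1) / (2 * real j + 1)"
  obtain K where K: "\<And>t. t \<ge> 0 \<Longrightarrow> \<bar>integrand j t\<bar> \<le> K * exp (- t / 4)"
    using abs_integrand_le_exp by blast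
  have "((\<lambda>Y. J - Re (rect_top_integral j Y) / 2) \<longlongrightarrow> J - Re 0 / 2) at_top"
    by (intro tendsto_intros rect_top_integral_tendsto_0) simp
  moreover have "(\<lambda>t. K * exp (- t / 4)) integrable_on {0..}"
    using integrable_on_cmult_left[OF integrable_on_exp_minus_to_infinity[of "1 / 4" 0]] by simp
  ultimately have "(integrand j has_integral J) {0..}"
    using has_integral_integrand_truncated K unfolding J_def
    by (intro has_integral_atLeast_of_truncations) auto
  then have "(integrand j has_integral J) {0<..}"
    by (rule has_integral_spike_set_eq[THEN iffD1, rotated 2]) (auto intro: negligible_subset[of "{0}"])
  then show ?thesis
    by (simp add: J_def integrand_def [abs_def])
qed

end
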